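(* Let $n\ge 2$, let $H(t)$, $0\le t\le T$, be a piecewise-continuous U(1)-invariant Hamiltonian on $n$ qubits, and let $1\le k\le n$, let $i_1,\dots,i_k$ be $k$ distinct qubits and $a(t)$ a real piecewise-continuous function. Let $\Delta_3$ and $\Delta_3'$ denote the phases of the unitaries generated by $H(t)$ and by $H'(t)=H(t)+a(t)\,Z_{i_1}Z_{i_2}\cdots Z_{i_k}$, respectively. Then $\Delta_3'=\Delta_3\pmod{2\pi}$ if $k$ is even, and $$\Delta_3'=\Delta_3-4(k-1)\int_0^T a(t)\,dt \pmod{2\pi}$$ if $k$ is odd.
   Context: Qubits $1,\dots,n$, Hilbert space $(\mathbb{C}^2)^{\otimes n}$, $Z_j$ the Pauli $Z$ on qubit $j$. For $m=0,\dots,n$, $\Pi_m$ is the projector onto the span of computational basis states with exactly $m$ qubits in state $|1\rangle$. A Hamiltonian is U(1)-invariant if it commutes with $\sum_j Z_j$ (note $Z_{i_1}\cdots Z_{i_k}$ is U(1)-invariant). For a U(1)-invariant $H(t)$, $V=\mathcal{T}\exp(-i\int_0^T H(t)dt)$ (time-ordered exponential) satisfies $V=\bigoplus_{m=0}^n V_m$ with $V_m$ the restriction of $V$ to the range of $\Pi_m$; define $\theta_m=\arg\det(V_m)\in(-\pi,\pi]$ and $\Delta_3=\theta_{n-1}-\theta_1-(n-2)(\theta_n-\theta_0)\pmod{2\pi}$. *)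

theory Defs
  imports "HOL-Analysis.Analysis"
begin

text \<open>Computational basis states of n qubits (labelled 1..n) are identified with the
  set of qubits that are in state |1>. Operators are complex matrices indexed by
  basis states (only entries with both indices in qbasis n are relevant).\<close>

definition qbasis :: "nat \<Rightarrow> nat set set" where
  "qbasis n = Pow {1..n}"

type_synonym qop = "nat set \<Rightarrow> nat set \<Rightarrow> complex"

definition mmul :: "nat \<Rightarrow> qop \<Rightarrow> qop \<Rightarrow> qop" where
  "mmul n A B = (\<lambda>S R. \<Sum>K\<in>qbasis n. A S K * B K R)"

definition idop :: qop where
  "idop = (\<lambda>S R. if S = R then 1 else 0)"

definition Zop :: "nat \<Rightarrow> qop" where
  "Zop j = (\<lambda>S R. if S = R then (if j \<in> S then -1 else 1) else 0)"

fun Zprod :: "nat \<Rightarrow> nat list \<Rightarrow> qop" where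
  "Zprod n [] = idop"
| "Zprod n (i # is) = mmul n (Zop i) (Zprod n is)"

definition Ztot :: "nat \<Rightarrow> qop" where
  "Ztot n = (\<lambda>S R. \<Sum>j\<in>{1..n}. Zop j S R)"

definition hermitian_op :: "nat \<Rightarrow> qop \<Rightarrow> bool" where
  "hermitian_op n A \<longleftrightarrow> (\<forall>S\<in>qbasis n. \<forall>R\<in>qbasis n. A S R = cnj (A R S))"

definition U1_invariant :: "nat \<Rightarrow> qop \<Rightarrow> bool" where
  "U1_invariant n A \<longleftrightarrow>
     (\<forall>S\<in>qbasis n. \<forall>R\<in>qbasis n. mmul n A (Ztot n) S R = mmul n (Ztot n) A S R)"

definition pw_continuous_on :: "real \<Rightarrow> real \<Rightarrow> (real \<Rightarrow> 'b::topological_space) \<Rightarrow> bool" where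
  "pw_continuous_on a b f \<longleftrightarrow>
     (\<exists>D. finite D \<and> continuous_on ({a..b} - D) f \<and>
        (\<forall>d\<in>D. (a < d \<longrightarrow> (\<exists>l. (f \<longlongrightarrow> l) (at_left d))) \<and>
                 (d < b \<longrightarrow> (\<exists>l. (f \<longlongrightarrow> l) (at_right d)))))"

definition pw_continuous_ham :: "nat \<Rightarrow> real \<Rightarrow> (real \<Rightarrow> qop) \<Rightarrow> bool" where
  "pw_continuous_ham n T H \<longleftrightarrow>
     (\<forall>S\<in>qbasis n. \<forall>R\<in>qbasis n. pw_continuous_on 0 T (\<lambda>t. H t S R))"

text \<open>V solves the Schroedinger equation dV/dt = -i H(t) V(t), V(0) = 1, in integral form
  on [0,T]; V T is then the time-ordered exponential T exp(-i int_0^T H(t) dt).\<close>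
definition propagator :: "nat \<Rightarrow> real \<Rightarrow> (real \<Rightarrow> qop) \<Rightarrow> (real \<Rightarrow> qop) \<Rightarrow> bool" where
  "propagator n T H V \<longleftrightarrow>
     (\<forall>t\<in>{0..T}. \<forall>S\<in>qbasis n. \<forall>R\<in>qbasis n.
        ((\<lambda>s. - \<i> * mmul n (H s) (V s) S R) has_integral (V t S R - idop S R)) {0..t})"

definition det_on :: "nat set set \<Rightarrow> qop \<Rightarrow> complex" where
  "det_on B A = (\<Sum>p | p permutes B. of_int (sign p) * (\<Prod>S\<in>B. A S (p S)))"

definition theta :: "nat \<Rightarrow> qop \<Rightarrow> nat \<Rightarrow> real" where
  "theta n V m = Arg (det_on {S \<in> qbasis n. card S = m} V)"

definition Delta3 :: "nat \<Rightarrow> qop \<Rightarrow> real" where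
  "Delta3 n V = theta n V (n - 1) - theta n V 1 - (real n - 2) * (theta n V n - theta n V 0)"

definition cong_2pi :: "real \<Rightarrow> real \<Rightarrow> bool" where
  "cong_2pi x y \<longleftrightarrow> (\<exists>m::int. x - y = 2 * pi * of_int m)"

end

theory Submission
  imports Defs
begin

text \<open>The Hamiltonian conserves the number of qubits in state |1>, so the propagator splits into
  blocks V_m, and Liouville's formula gives det V_m(T) = exp (-i times the integral of the trace of H on
  the m-th block). The perturbation a(t) Z_{i_1}...Z_{i_k} is diagonal with entries (-1)^|S \<inter> I| on a
  basis state S, so it adds a(t) times the parity sum of these signs over the block to that trace and
  shifts theta_m by minus this parity sum times the integral of a, modulo 2 pi. For m = 0, 1, n - 1, n
  the parity sums are 1, n - 2k, (-1)^k (n - 2k) and (-1)^k, whose combination in Delta_3 is 0 for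
  even k and 4 (k - 1) for odd k.\<close>

section \<open>Piecewise continuous functions\<close>

lemma compact_locally_bounded:
  fixes f :: "'a::topological_space \<Rightarrow> 'b::real_normed_vector"
  assumes "compact K" and "\<forall>x\<in>K. \<exists>M. eventually (\<lambda>y. P y \<longrightarrow> norm (f y) \<le> M) (nhds x)"
  shows "\<exists>M. \<forall>y\<in>K. P y \<longrightarrow> norm (f y) \<le> M"
proof -
  have "\<forall>x\<in>K. \<exists>M U. open U \<and> x \<in> U \<and> (\<forall>y\<in>U. P y \<longrightarrow> norm (f y) \<le> M)"
    using assms(2) by (simp add: eventually_nhds)
  then obtain M U where U: "\<And>x. x \<in> K \<Longrightarrow> open (U x) \<and> x \<in> U x \<and> (\<forall>y\<in>U x. P y \<longrightarrow> norm (f y) \<le> M x)"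
    by metis
  obtain C where C: "C \<subseteq> K" "finite C" "K \<subseteq> (\<Union>x\<in>C. U x)"
  proof (rule compactE_image[OF assms(1), of K U])
    show "open (U x)" if "x \<in> K" for x
      using U[OF that] by blast
    show "K \<subseteq> (\<Union>x\<in>K. U x)"
      using U by blast
  qed
  have "norm (f y) \<le> (\<Sum>x\<in>C. \<bar>M x\<bar>)" if "y \<in> K" "P y" for y
  proof -
    obtain x where x: "x \<in> C" "y \<in> U x"
      using C(3) \<open>y \<in> K\<close> by blast
    then have "norm (f y) \<le> M x"
      using U[of x] C(1) \<open>P y\<close> by blast
    also have "\<dots> \<le> \<bar>M x\<bar>"
      by simp
    also have "\<dots> \<le> (\<Sum>x\<in>C. \<bar>M x\<bar>)"
      using C(2) x(1) by (intro member_le_sum) auto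
    finally show ?thesis .
  qed
  then show ?thesis by blast
qed

lemma convergent_or_avoiding_imp_eventually_bounded:
  fixes f :: "'a \<Rightarrow> 'b::real_normed_vector"
  assumes "(\<exists>l. (f \<longlongrightarrow> l) F) \<or> eventually (\<lambda>y. y \<notin> A) F"
  shows "\<exists>M. eventually (\<lambda>y. y \<in> A \<longrightarrow> norm (f y) \<le> M) F"
  using assms
proof
  assume "\<exists>l. (f \<longlongrightarrow> l) F"
  then obtain l where "(f \<longlongrightarrow> l) F"
    by blast
  from order_tendstoD(2)[OF tendsto_norm[OF this], of "norm l + 1"] show ?thesis
    by (intro exI[of _ "norm l + 1"]) (auto elim: eventually_mono)
next
  assume "eventually (\<lambda>y. y \<notin> A) F"
  then show ?thesis
    by (intro exI[of _ 0]) (auto elim: eventually_mono)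
qed

lemma eventually_nhds_bounded_off_finite:
  fixes f :: "'a::t1_space \<Rightarrow> 'b::real_normed_vector"
  assumes "finite D" and "eventually (\<lambda>y. y \<in> A - D \<longrightarrow> norm (f y) \<le> M) (at x)"
  shows "eventually (\<lambda>y. y \<in> A \<longrightarrow> norm (f y) \<le> max M (norm (f x))) (nhds x)"
proof -
  have "open (- (D - {x}))"
    using assms(1) by (intro open_Compl finite_imp_closed) auto
  then have "eventually (\<lambda>y. y \<in> - (D - {x}) - {x}) (at x)"
    by (rule eventually_at_in_open) simp
  with assms(2) have "eventually (\<lambda>y. y \<in> A \<longrightarrow> norm (f y) \<le> max M (norm (f x))) (at x)"
    by eventually_elim auto
  then show ?thesis
    unfolding eventually_nhds_conv_at by auto
qed

lemma pw_continuous_on_locally_bounded: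
  fixes f :: "real \<Rightarrow> 'b::real_normed_vector"
  assumes "pw_continuous_on a b f" and x: "x \<in> {a..b}"
  shows "\<exists>M. eventually (\<lambda>y. y \<in> {a..b} \<longrightarrow> norm (f y) \<le> M) (nhds x)"
proof -
  obtain D where D: "finite D" "continuous_on ({a..b} - D) f"
    "\<And>d. d \<in> D \<Longrightarrow> (a < d \<longrightarrow> (\<exists>l. (f \<longlongrightarrow> l) (at_left d))) \<and> (d < b \<longrightarrow> (\<exists>l. (f \<longlongrightarrow> l) (at_right d)))"
    using assms(1) unfolding pw_continuous_on_def by blast
  have "\<exists>M. eventually (\<lambda>y. y \<in> {a..b} - D \<longrightarrow> norm (f y) \<le> M) (at x)"
  proof (cases "x \<in> D")
    case False
    then have "(f \<longlongrightarrow> f x) (at x within {a..b} - D)"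
      using D(2) x by (simp add: continuous_on_def)
    then obtain M where "eventually (\<lambda>y. y \<in> {a..b} - D \<longrightarrow> norm (f y) \<le> M) (at x within {a..b} - D)"
      using convergent_or_avoiding_imp_eventually_bounded by blast
    then show ?thesis
      by (auto simp: eventually_at_filter)
  next
    case True
    have "(\<exists>l. (f \<longlongrightarrow> l) (at_left x)) \<or> eventually (\<lambda>y. y \<notin> {a..b} - D) (at_left x)"
      using D(3)[OF True] x by (cases "a < x") (auto simp: eventually_at_filter)
    then obtain M1 where M1: "eventually (\<lambda>y. y \<in> {a..b} - D \<longrightarrow> norm (f y) \<le> M1) (at_left x)"
      using convergent_or_avoiding_imp_eventually_bounded by blast
    have "(\<exists>l. (f \<longlongrightarrow> l) (at_right x)) \<or> eventually (\<lambda>y. y \<notin> {a..b} - D) (at_right x)"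
      using D(3)[OF True] x by (cases "x < b") (auto simp: eventually_at_filter)
    then obtain M2 where M2: "eventually (\<lambda>y. y \<in> {a..b} - D \<longrightarrow> norm (f y) \<le> M2) (at_right x)"
      using convergent_or_avoiding_imp_eventually_bounded by blast
    have "eventually (\<lambda>y. y \<in> {a..b} - D \<longrightarrow> norm (f y) \<le> max M1 M2) (at x)"
      unfolding eventually_at_split using M1 M2 by (auto elim: eventually_mono)
    then show ?thesis
      by blast
  qed
  then obtain M where "eventually (\<lambda>y. y \<in> {a..b} - D \<longrightarrow> norm (f y) \<le> M) (at x)"
    by blast
  from eventually_nhds_bounded_off_finite[OF D(1) this] show ?thesis
    by blast
qed

lemma pw_continuous_on_bounded:
  fixes f :: "real \<Rightarrow> 'b::real_normed_vector"
  assumes "pw_continuous_on a b f"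
  shows "\<exists>M. \<forall>x\<in>{a..b}. norm (f x) \<le> M"
  using compact_locally_bounded[OF compact_Icc, of a b "\<lambda>y. y \<in> {a..b}" f]
    pw_continuous_on_locally_bounded[OF assms] by blast

lemma pw_continuous_on_integrable:
  fixes f :: "real \<Rightarrow> 'b::euclidean_space"
  assumes "pw_continuous_on a b f"
  shows "f integrable_on {a..b}"
proof -
  obtain M where M: "\<And>x. x \<in> {a..b} \<Longrightarrow> norm (f x) \<le> M"
    using pw_continuous_on_bounded[OF assms] by blast
  obtain D where D: "finite D" "continuous_on ({a..b} - D) f"
    using assms unfolding pw_continuous_on_def by blast
  have "{a..b} - D \<in> sets lebesgue"
    using D(1) by (meson finite_imp_null_set_lborel lmeasurable_interval(1) measurable_Diff_null_set
        null_sets_completionI)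
  then have "f measurable_on ({a..b} - D)"
    using D(2) continuous_imp_measurable_on_sets_lebesgue measurable_on_iff_borel_measurable by blast
  then have "f measurable_on {a..b}"
    by (rule measurable_on_spike_set) (auto intro: negligible_subset[of D] simp: D(1) negligible_finite)
  then have "f \<in> borel_measurable (lebesgue_on {a..b})"
    by (simp add: measurable_on_iff_borel_measurable)
  then show ?thesis
    by (rule measurable_bounded_by_integrable_imp_integrable[where g = "\<lambda>_. M"]) (auto simp: M)
qed

lemma pw_continuous_on_common_exceptions:
  assumes "finite I" and "\<forall>i\<in>I. pw_continuous_on a b (f i)"
  obtains E where "finite E" and "\<And>i. i \<in> I \<Longrightarrow> continuous_on ({a..b} - E) (f i)"
proof -
  obtain D where D: "\<And>i. i \<in> I \<Longrightarrow> finite (D i) \<and> continuous_on ({a..b} - D i) (f i)"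
    using assms(2) unfolding pw_continuous_on_def by metis
  show ?thesis
  proof
    show "finite (\<Union>i\<in>I. D i)" using assms(1) D by blast
    show "continuous_on ({a..b} - (\<Union>i\<in>I. D i)) (f i)" if "i \<in> I" for i
      using D[OF that] by (rule continuous_on_subset[OF conjunct2]) (use that in blast)
  qed
qed

section \<open>Operators on n qubits\<close>

abbreviation sector :: "nat \<Rightarrow> nat \<Rightarrow> nat set set" where
  "sector n m \<equiv> {S \<in> qbasis n. card S = m}"

lemma finite_qbasis [simp]: "finite (qbasis n)"
  by (simp add: qbasis_def)

lemma pw_continuous_ham_common_exceptions:
  assumes "pw_continuous_ham n T H" and "pw_continuous_on 0 T a"
  obtains E where "finite E" and "continuous_on ({0..T} - E) a"
    and "\<And>S R. S \<in> qbasis n \<Longrightarrow> R \<in> qbasis n \<Longrightarrow> continuous_on ({0..T} - E) (\<lambda>t. H t S R)"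
proof -
  obtain E0 where E0: "finite E0"
    "\<And>SR. SR \<in> qbasis n \<times> qbasis n \<Longrightarrow> continuous_on ({0..T} - E0) (\<lambda>t. H t (fst SR) (snd SR))"
    using pw_continuous_on_common_exceptions[of "qbasis n \<times> qbasis n" 0 T "\<lambda>SR t. H t (fst SR) (snd SR)"]
      assms(1) unfolding pw_continuous_ham_def by auto
  obtain Ea where Ea: "finite Ea" "continuous_on ({0..T} - Ea) a"
    using assms(2) unfolding pw_continuous_on_def by blast
  show ?thesis
  proof
    show "finite (E0 \<union> Ea)"
      using E0(1) Ea(1) by simp
    show "continuous_on ({0..T} - (E0 \<union> Ea)) a"
      using Ea(2) by (rule continuous_on_subset) auto
    show "continuous_on ({0..T} - (E0 \<union> Ea)) (\<lambda>t. H t S R)" if "S \<in> qbasis n" "R \<in> qbasis n" for S R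
      using E0(2)[of "(S, R)"] that by (auto elim: continuous_on_subset)
  qed
qed

lemma mmul_diagonal_left:
  assumes "S \<in> qbasis n" and "\<And>K. K \<noteq> S \<Longrightarrow> A S K = 0"
  shows "mmul n A B S R = A S S * B S R"
  unfolding mmul_def using assms by (simp add: sum.remove)

lemma mmul_diagonal_right:
  assumes "R \<in> qbasis n" and "\<And>K. K \<noteq> R \<Longrightarrow> B K R = 0"
  shows "mmul n A B S R = A S R * B R R"
  unfolding mmul_def using assms by (simp add: sum.remove)

lemma Zprod_eq:
  assumes "S \<in> qbasis n" and "distinct qs"
  shows "Zprod n qs S R = (if S = R then (-1) ^ card (S \<inter> set qs) else 0)"
  using assms(2)
proof (induction qs arbitrary: R)
  case Nil
  show ?case by (simp add: idop_def)
next
  case (Cons i qs)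
  have "Zprod n (i # qs) S R = Zop i S S * Zprod n qs S R"
    by (simp add: mmul_diagonal_left[OF assms(1)] Zop_def)
  moreover have "card (S \<inter> set (i # qs)) = (if i \<in> S then Suc (card (S \<inter> set qs)) else card (S \<inter> set qs))"
    using Cons.prems by (auto simp: Int_insert_right)
  ultimately show ?case using Cons by (simp add: Zop_def)
qed

lemma Ztot_eq:
  assumes "S \<in> qbasis n"
  shows "Ztot n S R = (if S = R then of_nat n - 2 * of_nat (card S) else 0)"
proof (cases "S = R")
  case True
  have sub: "S \<subseteq> {1..n}" using assms by (simp add: qbasis_def)
  have "Ztot n S S = (\<Sum>j\<in>{1..n} \<inter> S. -1) + (\<Sum>j\<in>{1..n} - S. 1)"
    unfolding Ztot_def Zop_def by (simp add: sum.If_cases Diff_eq)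
  also have "\<dots> = of_nat n - 2 * of_nat (card S)"
    using sub card_mono[OF _ sub] by (simp add: Int_absorb1 card_Diff_subset finite_subset)
  finally show ?thesis using True by simp
qed (simp add: Ztot_def Zop_def)

lemma U1_invariant_offdiagonal_sector:
  assumes "U1_invariant n A" "S \<in> qbasis n" "R \<in> qbasis n" "card S \<noteq> card R"
  shows "A S R = 0"
proof -
  have "mmul n A (Ztot n) S R = A S R * Ztot n R R"
    by (rule mmul_diagonal_right[OF assms(3)]) (simp add: Ztot_def Zop_def)
  moreover have "mmul n (Ztot n) A S R = Ztot n S S * A S R"
    by (rule mmul_diagonal_left[OF assms(2)]) (simp add: Ztot_eq[OF assms(2)])
  ultimately show ?thesis using assms by (auto simp: U1_invariant_def Ztot_eq)
qed

section \<open>Determinants\<close>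

lemma det_on_cong:
  assumes "\<And>S R. S \<in> B \<Longrightarrow> R \<in> B \<Longrightarrow> M S R = N S R"
  shows "det_on B M = det_on B N"
  unfolding det_on_def
  by (intro sum.cong refl arg_cong2[where f="(*)"] prod.cong) (auto intro!: assms simp: permutes_in_image)

lemma det_on_idop:
  assumes "finite B"
  shows "det_on B idop = 1"
proof -
  have "(\<Prod>S\<in>B. idop S (p S)) = (if p = id then 1 else 0)" if "p permutes B" for p
  proof (cases "p = id")
    case False
    then obtain S where "p S \<noteq> S" by (metis eq_id_iff)
    moreover from this have "S \<in> B" using that by (auto simp: permutes_def)
    ultimately show ?thesis using assms False by (auto simp: idop_def intro: prod_zero)
  qed (simp add: idop_def)
  then have "det_on B idop = (\<Sum>p | p permutes B. if p = id then 1 else 0)"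
    unfolding det_on_def by (intro sum.cong) auto
  also have "\<dots> = 1"
    using assms by (simp add: finite_permutations)
  finally show ?thesis .
qed

lemma det_on_eq_rows:
  assumes "finite B" "S1 \<in> B" "S2 \<in> B" "S1 \<noteq> S2" and "M S1 = M S2"
  shows "det_on B M = 0"
proof -
  define \<tau> where "\<tau> = Transposition.transpose S1 S2"
  have \<tau>: "\<tau> permutes B" unfolding \<tau>_def using assms by (simp add: permutes_swap_id)
  define F where "F = (\<lambda>p. of_int (sign p) * (\<Prod>S\<in>B. M S (p S)))"
  have F_swap: "F (p \<circ> \<tau>) = - F p" if p: "p permutes B" for p
  proof -
    have "sign (p \<circ> \<tau>) = - sign p"
      using p assms unfolding \<tau>_def
      by (simp add: sign_compose permutes_imp_permutation[OF assms(1)] permutation_swap_id sign_swap_id)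
    moreover have "(\<Prod>S\<in>B. M S (p (\<tau> S))) = (\<Prod>S\<in>B. M S (p S))"
    proof -
      have "M (\<tau> S) = M S" for S
        using assms(5) by (simp add: \<tau>_def Transposition.transpose_def)
      then have "(\<Prod>S\<in>B. M S (p (\<tau> S))) = (\<Prod>S\<in>B. M (\<tau> S) (p (\<tau> S)))"
        by simp
      also have "\<dots> = (\<Prod>S\<in>B. M S (p S))"
        using prod.permute[OF \<tau>, of "\<lambda>S. M S (p S)"] by (simp add: comp_def)
      finally show ?thesis .
    qed
    ultimately show ?thesis
      unfolding F_def by simp
  qed
  have "sum F {p. p permutes B} = (\<Sum>p | p permutes B. F (p \<circ> \<tau>))"
    by (rule sum_permutations_compose_right[OF \<tau>])
  also have "\<dots> = - sum F {p. p permutes B}"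
    by (simp add: F_swap sum_negf)
  finally have "sum F {p. p permutes B} = 0"
    by simp
  then show ?thesis unfolding det_on_def F_def by simp
qed

lemma det_on_replace_row:
  assumes "finite B" "S0 \<in> B"
  shows "det_on B (\<lambda>S R. if S = S0 then X R else M S R)
       = (\<Sum>p | p permutes B. of_int (sign p) * (X (p S0) * (\<Prod>S\<in>B - {S0}. M S (p S))))"
  unfolding det_on_def using assms by (intro sum.cong refl) (simp add: prod.remove)

text \<open>Expand by linearity in row S0: every summand with K \<noteq> S0 is a determinant with two equal rows.\<close>

lemma det_on_replace_row_combination:
  assumes "finite B" "S0 \<in> B"
  shows "det_on B (\<lambda>S R. if S = S0 then (\<Sum>K\<in>B. c K * M K R) else M S R) = c S0 * det_on B M"
proof -
  have "det_on B (\<lambda>S R. if S = S0 then (\<Sum>K\<in>B. c K * M K R) else M S R)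
      = (\<Sum>K\<in>B. c K * det_on B (\<lambda>S R. if S = S0 then M K R else M S R))"
  proof -
    have "(\<Sum>p | p permutes B. of_int (sign p) * ((\<Sum>K\<in>B. c K * M K (p S0)) * (\<Prod>S\<in>B - {S0}. M S (p S))))
        = (\<Sum>p | p permutes B. \<Sum>K\<in>B. c K * (of_int (sign p) * (M K (p S0) * (\<Prod>S\<in>B - {S0}. M S (p S)))))"
      by (simp add: sum_distrib_left sum_distrib_right mult_ac)
    also have "\<dots> = (\<Sum>K\<in>B. c K * (\<Sum>p | p permutes B. of_int (sign p) * (M K (p S0) * (\<Prod>S\<in>B - {S0}. M S (p S)))))"
      by (subst sum.swap) (simp add: sum_distrib_left)
    finally show ?thesis
      by (simp add: det_on_replace_row[OF assms])
  qed
  also have "\<dots> = (\<Sum>K\<in>B. if K = S0 then c S0 * det_on B M else 0)"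
  proof (intro sum.cong refl)
    fix K assume "K \<in> B"
    then have "K \<noteq> S0 \<Longrightarrow> det_on B (\<lambda>S R. if S = S0 then M K R else M S R) = 0"
      using assms by (intro det_on_eq_rows[of B S0 K]) auto
    then show "c K * det_on B (\<lambda>S R. if S = S0 then M K R else M S R) = (if K = S0 then c S0 * det_on B M else 0)"
      by (auto intro: det_on_cong)
  qed
  also have "\<dots> = c S0 * det_on B M"
    using assms by simp
  finally show ?thesis .
qed

section \<open>Liouville's formula\<close>

lemma integral_equation_continuous_on:
  fixes m g :: "real \<Rightarrow> 'a::banach"
  assumes "\<And>t. t \<in> {0..T} \<Longrightarrow> (g has_integral (m t - c)) {0..t}"
  shows "continuous_on {0..T} m"
proof (cases "0 \<le> T")
  case True
  then have "g integrable_on {0..T}"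
    using assms[of T] by (auto intro: has_integral_integrable)
  then have "continuous_on {0..T} (\<lambda>t. c + integral {0..t} g)"
    by (intro continuous_intros indefinite_integral_continuous_1)
  moreover have "c + integral {0..t} g = m t" if "t \<in> {0..T}" for t
    using integral_unique[OF assms[OF that]] by simp
  ultimately show ?thesis
    by (rule continuous_on_eq)
qed simp

lemma integral_equation_has_vector_derivative:
  fixes m g :: "real \<Rightarrow> 'a::banach"
  assumes m: "\<And>t. t \<in> {0..T} \<Longrightarrow> (g has_integral (m t - c)) {0..t}"
    and E: "finite E" and g: "continuous_on ({0..T} - E) g" and x: "x \<in> {0<..<T} - E"
  shows "(m has_vector_derivative g x) (at x)"
proof -
  define U where "U = {0<..<T} - E"
  have U: "open U" "x \<in> U" "U \<subseteq> {0..T} - E"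
    unfolding U_def using E x by (auto intro: open_Diff finite_imp_closed)
  have "g integrable_on {0..T}"
    using m[of T] x by auto
  then have "((\<lambda>t. integral {0..t} g) has_vector_derivative g x) (at x within {0..T} - E)"
    using E U g by (intro integral_has_vector_derivative_continuous_at)
      (auto simp: continuous_on_eq_continuous_within)
  then have "((\<lambda>t. c + integral {0..t} g) has_vector_derivative g x) (at x within U)"
    by (intro derivative_eq_intros has_vector_derivative_within_subset[OF _ U(3)]) auto
  then have "((\<lambda>t. c + integral {0..t} g) has_vector_derivative g x) (at x)"
    using has_vector_derivative_within_open[OF U(2,1)] by blast
  then show ?thesis
    by (rule has_vector_derivative_transform_within_open[OF _ U(1,2)])
      (use U(3) in \<open>auto dest!: m integral_unique\<close>)
qed

lemma has_vector_derivative_det_on: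
  assumes "finite B"
    and "\<And>S R. S \<in> B \<Longrightarrow> R \<in> B \<Longrightarrow> ((\<lambda>t. M t S R) has_vector_derivative M' S R) (at x)"
  shows "((\<lambda>t. det_on B (M t)) has_vector_derivative
           (\<Sum>S0\<in>B. det_on B (\<lambda>S R. if S = S0 then M' S0 R else M x S R))) (at x)"
proof -
  have "((\<lambda>t. det_on B (M t)) has_derivative (\<lambda>h. \<Sum>p | p permutes B. of_int (sign p) *
          (\<Sum>S0\<in>B. (h *\<^sub>R M' S0 (p S0)) * (\<Prod>S\<in>B - {S0}. M x S (p S))))) (at x)"
    unfolding det_on_def
  proof (intro has_derivative_sum has_derivative_mult_right has_derivative_prod)
    fix p S0 assume "p \<in> {p. p permutes B}" "S0 \<in> B"
    then show "((\<lambda>t. M t S0 (p S0)) has_derivative (\<lambda>h. h *\<^sub>R M' S0 (p S0))) (at x)"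
      using assms(2) by (simp add: permutes_in_image has_vector_derivative_def)
  qed
  moreover have "(\<Sum>p | p permutes B. of_int (sign p) *
          (\<Sum>S0\<in>B. (h *\<^sub>R M' S0 (p S0)) * (\<Prod>S\<in>B - {S0}. M x S (p S))))
      = (\<Sum>p | p permutes B. \<Sum>S0\<in>B.
          h *\<^sub>R (of_int (sign p) * (M' S0 (p S0) * (\<Prod>S\<in>B - {S0}. M x S (p S)))))" for h
    by (simp add: sum_distrib_left mult_scaleR_left mult_scaleR_right)
  moreover have "(\<Sum>p | p permutes B. \<Sum>S0\<in>B.
          h *\<^sub>R (of_int (sign p) * (M' S0 (p S0) * (\<Prod>S\<in>B - {S0}. M x S (p S)))))
      = h *\<^sub>R (\<Sum>S0\<in>B. \<Sum>p | p permutes B.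
          of_int (sign p) * (M' S0 (p S0) * (\<Prod>S\<in>B - {S0}. M x S (p S))))" for h
    by (subst sum.swap) (simp add: scaleR_sum_right)
  ultimately show ?thesis
    unfolding has_vector_derivative_def by (simp add: det_on_replace_row[OF assms(1)])
qed

lemma has_vector_derivative_det_on_linear_ode:
  assumes "finite B"
    and "\<And>S R. S \<in> B \<Longrightarrow> R \<in> B \<Longrightarrow>
           ((\<lambda>t. M t S R) has_vector_derivative (\<Sum>K\<in>B. G S K * M x K R)) (at x)"
  shows "((\<lambda>t. det_on B (M t)) has_vector_derivative (\<Sum>S\<in>B. G S S) * det_on B (M x)) (at x)"
  using has_vector_derivative_det_on[of B M "\<lambda>S R. \<Sum>K\<in>B. G S K * M x K R", OF assms]
  by (simp add: det_on_replace_row_combination[OF assms(1)] sum_distrib_right)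

lemma has_vector_derivative_det_on_integral_equation:
  fixes M G :: "real \<Rightarrow> qop"
  assumes B: "finite B" and E: "finite E"
    and G: "\<And>S R. S \<in> B \<Longrightarrow> R \<in> B \<Longrightarrow> continuous_on ({0..T} - E) (\<lambda>t. G t S R)"
    and M: "\<And>t S R. t \<in> {0..T} \<Longrightarrow> S \<in> B \<Longrightarrow> R \<in> B \<Longrightarrow>
              ((\<lambda>s. \<Sum>K\<in>B. G s S K * M s K R) has_integral (M t S R - idop S R)) {0..t}"
    and x: "x \<in> {0<..<T} - E"
  shows "((\<lambda>t. det_on B (M t)) has_vector_derivative (\<Sum>S\<in>B. G x S S) * det_on B (M x)) (at x)"
proof (rule has_vector_derivative_det_on_linear_ode[OF B, where G = "G x"])
  fix S R assume S: "S \<in> B" and R: "R \<in> B"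
  have M_cont: "continuous_on {0..T} (\<lambda>t. M t K R)" if "K \<in> B" for K
    using M R that by (intro integral_equation_continuous_on) blast
  have "((\<lambda>s. \<Sum>K\<in>B. G s S K * M s K R) has_integral (M t S R - idop S R)) {0..t}"
    if "t \<in> {0..T}" for t
    using M that S R by blast
  moreover have "continuous_on ({0..T} - E) (\<lambda>s. \<Sum>K\<in>B. G s S K * M s K R)"
    using S by (intro continuous_intros G continuous_on_subset[OF M_cont]) auto
  ultimately show "((\<lambda>t. M t S R) has_vector_derivative (\<Sum>K\<in>B. G x S K * M x K R)) (at x)"
    by (rule integral_equation_has_vector_derivative[OF _ E _ x])
qed

text \<open>Liouville's formula for M' = G M, M(0) = 1: the function det M(t) exp (- integral of tr G over
  [0,t]) is continuous and has derivative zero off finitely many points, hence is constant.\<close>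

lemma det_on_linear_integral_equation:
  fixes M G :: "real \<Rightarrow> qop"
  assumes B: "finite B" and T: "0 \<le> T" and E: "finite E"
    and G: "\<And>S R. S \<in> B \<Longrightarrow> R \<in> B \<Longrightarrow> continuous_on ({0..T} - E) (\<lambda>t. G t S R)"
    and tr: "((\<lambda>t. \<Sum>S\<in>B. G t S S) has_integral h) {0..T}"
    and M: "\<And>t S R. t \<in> {0..T} \<Longrightarrow> S \<in> B \<Longrightarrow> R \<in> B \<Longrightarrow>
              ((\<lambda>s. \<Sum>K\<in>B. G s S K * M s K R) has_integral (M t S R - idop S R)) {0..t}"
  shows "det_on B (M T) = exp h"
proof -
  define tr where "tr = (\<lambda>t. \<Sum>S\<in>B. G t S S)"
  define f where "f t = det_on B (M t) * exp (- integral {0..t} tr)" for t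
  have M_cont: "continuous_on {0..T} (\<lambda>t. M t S R)" if "S \<in> B" "R \<in> B" for S R
    using M that by (intro integral_equation_continuous_on) blast
  have tr_int: "(tr has_integral (integral {0..t} tr - 0)) {0..t}" if "t \<in> {0..T}" for t
  proof -
    have "tr integrable_on {0..t}"
      using integrable_subinterval_real[OF has_integral_integrable[OF tr[folded tr_def]]] that by auto
    then show ?thesis
      by (simp add: has_integral_integral)
  qed
  have tr_cont: "continuous_on ({0..T} - E) tr"
    unfolding tr_def by (intro continuous_intros G)
  have f': "(f has_derivative (\<lambda>_. 0)) (at x within {0..T})" if x: "x \<in> {0..T} - (E \<union> {0, T})" for x
  proof -
    have x': "x \<in> {0<..<T} - E" using x by auto
    have det': "((\<lambda>t. det_on B (M t)) has_vector_derivative tr x * det_on B (M x)) (at x)"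
      unfolding tr_def by (rule has_vector_derivative_det_on_integral_equation[OF B E G M x'])
    have "((\<lambda>t. - integral {0..t} tr) has_vector_derivative - tr x) (at x)"
      by (intro derivative_intros integral_equation_has_vector_derivative[OF tr_int E tr_cont x'])
    from field_vector_diff_chain_at[OF this DERIV_exp]
    have exp': "((\<lambda>t. exp (- integral {0..t} tr)) has_vector_derivative - tr x * exp (- integral {0..x} tr)) (at x)"
      by (simp add: o_def)
    have "(f has_vector_derivative 0) (at x)"
      unfolding f_def using has_vector_derivative_mult[OF det' exp'] by (simp add: algebra_simps)
    then show ?thesis
      unfolding has_vector_derivative_def by (auto intro: has_derivative_at_withinI)
  qed
  have f_cont: "continuous_on {0..T} f"
    unfolding f_def det_on_def using tr_int[of T] T
    by (intro continuous_intros M_cont indefinite_integral_continuous_1)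
      (auto simp: permutes_in_image has_integral_integrable)
  have f0: "f 0 = 1"
  proof -
    have "M 0 S R = idop S R" if "S \<in> B" "R \<in> B" for S R
      using integral_unique[OF M[of 0 S R]] that T by simp
    then show ?thesis
      unfolding f_def by (simp add: det_on_cong[of B "M 0" idop] det_on_idop[OF B])
  qed
  have "f T = 1"
    using has_derivative_zero_unique_strong_interval[of "E \<union> {0, T}" 0 T f 1 T, OF _ f_cont f0 f'] E T
    by auto
  then show ?thesis
    using integral_unique[OF tr] unfolding f_def tr_def by (simp add: exp_minus field_simps)
qed

lemma det_on_sector_propagator:
  fixes Hx W :: "real \<Rightarrow> qop"
  assumes T: "0 \<le> T" and E: "finite E"
    and conserving: "\<And>t S R. t \<in> {0..T} \<Longrightarrow> S \<in> qbasis n \<Longrightarrow> R \<in> qbasis n \<Longrightarrow> card S \<noteq> card R \<Longrightarrow>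
                       Hx t S R = 0"
    and cont: "\<And>S R. S \<in> qbasis n \<Longrightarrow> R \<in> qbasis n \<Longrightarrow> continuous_on ({0..T} - E) (\<lambda>t. Hx t S R)"
    and tr: "((\<lambda>t. \<Sum>S\<in>sector n m. - \<i> * Hx t S S) has_integral h) {0..T}"
    and W: "propagator n T Hx W"
  shows "det_on (sector n m) (W T) = exp h"
proof (rule det_on_linear_integral_equation[where G = "\<lambda>t S R. - \<i> * Hx t S R", OF _ T E _ tr])
  show "finite (sector n m)"
    by simp
  show "continuous_on ({0..T} - E) (\<lambda>t. - \<i> * Hx t S R)" if "S \<in> sector n m" "R \<in> sector n m" for S R
    using that by (intro continuous_intros cont) auto
  show "((\<lambda>s. \<Sum>K\<in>sector n m. - \<i> * Hx s S K * W s K R) has_integral (W t S R - idop S R)) {0..t}"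
    if t: "t \<in> {0..T}" and S: "S \<in> sector n m" and R: "R \<in> sector n m" for t S R
  proof -
    have "mmul n (Hx s) (W s) S R = (\<Sum>K\<in>sector n m. Hx s S K * W s K R)" if "s \<in> {0..t}" for s
      unfolding mmul_def
    proof (rule sum.mono_neutral_right)
      show "\<forall>K\<in>qbasis n - sector n m. Hx s S K * W s K R = 0"
      proof
        fix K assume "K \<in> qbasis n - sector n m"
        then show "Hx s S K * W s K R = 0"
          using conserving[of s S K] S that t by auto
      qed
    qed auto
    then have "- \<i> * mmul n (Hx s) (W s) S R = (\<Sum>K\<in>sector n m. - \<i> * Hx s S K * W s K R)"
      if "s \<in> {0..t}" for s
      using that by (simp add: sum_distrib_left mult.assoc)
    moreover have "((\<lambda>s. - \<i> * mmul n (Hx s) (W s) S R) has_integral (W t S R - idop S R)) {0..t}"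
      using W t S R unfolding propagator_def by auto
    ultimately show ?thesis
      by (rule has_integral_eq)
  qed
qed

section \<open>Parity sums over the sectors\<close>

definition parity_sum :: "nat \<Rightarrow> nat set \<Rightarrow> nat \<Rightarrow> real" where
  "parity_sum n I m = (\<Sum>S\<in>sector n m. (-1) ^ card (S \<inter> I))"

lemma sum_Zprod_sector:
  assumes "distinct qs"
  shows "(\<Sum>S\<in>sector n m. Zprod n qs S S) = of_real (parity_sum n (set qs) m)"
  unfolding parity_sum_def using assms by (simp add: Zprod_eq)

lemma sector_0: "sector n 0 = {{}}"
  by (auto simp: qbasis_def finite_subset)

lemma sector_top: "sector n n = {{1..n}}"
proof -
  have "S = {1..n}" if "S \<subseteq> {1..n}" "card S = n" for S
    using card_subset_eq[OF _ that(1)] that(2) by simp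
  then show ?thesis
    by (auto simp: qbasis_def)
qed

lemma sector_1: "sector n 1 = (\<lambda>j. {j}) ` {1..n}"
  by (auto simp: qbasis_def card_1_singleton_iff)

lemma sector_top_minus_1:
  assumes "n \<ge> 1"
  shows "sector n (n - 1) = (\<lambda>j. {1..n} - {j}) ` {1..n}"
proof (intro equalityI subsetI)
  fix S assume S: "S \<in> sector n (n - 1)"
  then have "S \<subseteq> {1..n}" "card ({1..n} - S) = 1"
    using assms by (auto simp: qbasis_def card_Diff_subset finite_subset)
  then obtain j where "{1..n} - S = {j}"
    by (auto simp: card_1_singleton_iff)
  with \<open>S \<subseteq> {1..n}\<close> show "S \<in> (\<lambda>j. {1..n} - {j}) ` {1..n}"
    by (intro image_eqI[of _ _ j]) auto
qed (auto simp: qbasis_def)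

lemma parity_sum_0: "parity_sum n I 0 = 1"
  by (simp add: parity_sum_def sector_0)

lemma parity_sum_top: "I \<subseteq> {1..n} \<Longrightarrow> parity_sum n I n = (-1) ^ card I"
  by (simp add: parity_sum_def sector_top Int_absorb1)

lemma sum_sign_indicator:
  assumes "I \<subseteq> {1..n}"
  shows "(\<Sum>j\<in>{1..n}. if j \<in> I then -1 else 1) = real n - 2 * real (card I)"
proof -
  have "(\<Sum>j\<in>{1..n}. if j \<in> I then -1 else 1) = - real (card I) + real (card ({1..n} - I))"
    using assms by (simp add: sum.If_cases Int_absorb1 Diff_eq[symmetric])
  also have "\<dots> = real n - 2 * real (card I)"
    using assms card_mono[OF _ assms] by (simp add: card_Diff_subset finite_subset)
  finally show ?thesis .
qed

lemma parity_sum_1: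
  assumes "I \<subseteq> {1..n}"
  shows "parity_sum n I 1 = real n - 2 * real (card I)"
proof -
  have "parity_sum n I 1 = (\<Sum>j\<in>{1..n}. (-1) ^ card ({j} \<inter> I))"
    unfolding parity_sum_def sector_1 by (subst sum.reindex) (auto simp: inj_on_def)
  also have "\<dots> = (\<Sum>j\<in>{1..n}. if j \<in> I then -1 else 1)"
    by (intro sum.cong) auto
  finally show ?thesis
    using sum_sign_indicator[OF assms] by simp
qed

lemma parity_sum_top_minus_1:
  assumes "I \<subseteq> {1..n}" "n \<ge> 1"
  shows "parity_sum n I (n - 1) = (-1) ^ card I * (real n - 2 * real (card I))"
proof -
  have flip: "(-1) ^ card (I - {j}) = (-1) ^ card I * (if j \<in> I then -1 else (1::real))" for j
  proof (cases "j \<in> I")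
    case True
    define c where "c = card (I - {j})"
    have "card I = Suc c"
      using True assms(1) unfolding c_def by (metis card_Suc_Diff1 finite_atLeastAtMost finite_subset)
    then show ?thesis
      using True unfolding c_def[symmetric] by simp
  qed simp
  have "parity_sum n I (n - 1) = (\<Sum>j\<in>{1..n}. (-1) ^ card (({1..n} - {j}) \<inter> I))"
    unfolding parity_sum_def sector_top_minus_1[OF assms(2)] by (subst sum.reindex) (auto simp: inj_on_def)
  also have "\<dots> = (\<Sum>j\<in>{1..n}. (-1) ^ card I * (if j \<in> I then -1 else 1))"
  proof (intro sum.cong refl)
    fix j
    have "({1..n} - {j}) \<inter> I = I - {j}"
      using assms(1) by auto
    then show "(-1) ^ card (({1..n} - {j}) \<inter> I) = (-1) ^ card I * (if j \<in> I then -1 else (1::real))"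
      using flip by simp
  qed
  finally show ?thesis
    using sum_sign_indicator[OF assms(1)] by (simp add: sum_distrib_left[symmetric])
qed

lemma parity_sum_Delta3_combination:
  assumes "I \<subseteq> {1..n}" "n \<ge> 1"
  shows "parity_sum n I (n - 1) - parity_sum n I 1 - (real n - 2) * (parity_sum n I n - parity_sum n I 0)
       = (if even (card I) then 0 else 4 * (real (card I) - 1))"
  unfolding parity_sum_top_minus_1[OF assms] parity_sum_1[OF assms(1)] parity_sum_top[OF assms(1)] parity_sum_0
  by (cases "even (card I)") (simp_all add: algebra_simps)

section \<open>Phases\<close>

lemma cong_2pi_Arg_exp: "cong_2pi (Arg (exp z)) (Im z)"
proof -
  obtain k :: int where "Im z - of_int k * (2 * pi) = Arg (exp z)"
    using Arg_exp_diff_2pi by blast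
  then show ?thesis
    unfolding cong_2pi_def by (intro exI[of _ "-k"]) (simp add: algebra_simps)
qed

lemma cong_2pi_Delta3:
  assumes "\<And>m. cong_2pi (theta n V' m) (theta n V m - \<phi> m)"
  shows "cong_2pi (Delta3 n V') (Delta3 n V - (\<phi> (n - 1) - \<phi> 1 - (real n - 2) * (\<phi> n - \<phi> 0)))"
proof -
  obtain j where j: "\<And>m. theta n V' m = theta n V m - \<phi> m + 2 * pi * of_int (j m)"
    using assms unfolding cong_2pi_def by (metis add_diff_cancel_left' diff_add_cancel)
  have "real n - 2 = of_int (int n - 2)"
    by simp
  then show ?thesis
    unfolding cong_2pi_def Delta3_def j
    by (intro exI[of _ "j (n - 1) - j 1 - (int n - 2) * (j n - j 0)"]) (simp add: algebra_simps)
qed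

text \<open>The perturbation is diagonal, so on the sector it only adds the parity sum times a(t) to the
  trace of H.\<close>

lemma det_on_sector_perturbed:
  fixes H V' :: "real \<Rightarrow> qop" and a :: "real \<Rightarrow> real"
  assumes T: "0 \<le> T" and E: "finite E" and qs: "distinct qs"
    and conserving: "\<And>t S R. t \<in> {0..T} \<Longrightarrow> S \<in> qbasis n \<Longrightarrow> R \<in> qbasis n \<Longrightarrow> card S \<noteq> card R \<Longrightarrow>
                       H t S R = 0"
    and H_cont: "\<And>S R. S \<in> qbasis n \<Longrightarrow> R \<in> qbasis n \<Longrightarrow> continuous_on ({0..T} - E) (\<lambda>t. H t S R)"
    and a_cont: "continuous_on ({0..T} - E) a"
    and h: "((\<lambda>t. \<Sum>S\<in>sector n m. - \<i> * H t S S) has_integral h) {0..T}"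
    and A: "(a has_integral A) {0..T}"
    and V': "propagator n T (\<lambda>t S R. H t S R + complex_of_real (a t) * Zprod n qs S R) V'"
  shows "det_on (sector n m) (V' T) = exp (h - \<i> * of_real (parity_sum n (set qs) m * A))"
proof (rule det_on_sector_propagator[OF T E _ _ _ V'])
  define \<phi> where "\<phi> = parity_sum n (set qs) m"
  show "H t S R + complex_of_real (a t) * Zprod n qs S R = 0"
    if "t \<in> {0..T}" "S \<in> qbasis n" "R \<in> qbasis n" "card S \<noteq> card R" for t S R
    using conserving[OF that] that by (auto simp: Zprod_eq qs)
  show "continuous_on ({0..T} - E) (\<lambda>t. H t S R + complex_of_real (a t) * Zprod n qs S R)"
    if "S \<in> qbasis n" "R \<in> qbasis n" for S R
    by (intro continuous_intros H_cont a_cont that)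
  have trace_eq: "(\<Sum>S\<in>sector n m. - \<i> * (H t S S + complex_of_real (a t) * Zprod n qs S S))
      = (\<Sum>S\<in>sector n m. - \<i> * H t S S) + (- \<i> * of_real \<phi>) * of_real (a t)" for t
  proof -
    have "(\<Sum>S\<in>sector n m. - \<i> * (H t S S + complex_of_real (a t) * Zprod n qs S S))
        = (\<Sum>S\<in>sector n m. - \<i> * H t S S) + (- \<i> * of_real (a t)) * (\<Sum>S\<in>sector n m. Zprod n qs S S)"
      by (simp only: distrib_left sum.distrib sum_distrib_left mult.assoc)
    then show ?thesis
      using sum_Zprod_sector[OF qs, of n m] by (simp add: \<phi>_def mult_ac)
  qed
  have "((\<lambda>t. (\<Sum>S\<in>sector n m. - \<i> * H t S S) + (- \<i> * of_real \<phi>) * of_real (a t))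
      has_integral (h + (- \<i> * of_real \<phi>) * of_real A)) {0..T}"
    by (intro has_integral_add h has_integral_mult_right has_integral_of_real A)
  moreover have "h + (- \<i> * of_real \<phi>) * of_real A = h - \<i> * of_real (\<phi> * A)"
    by simp
  ultimately show "((\<lambda>t. \<Sum>S\<in>sector n m. - \<i> * (H t S S + complex_of_real (a t) * Zprod n qs S S))
      has_integral (h - \<i> * of_real (parity_sum n (set qs) m * A))) {0..T}"
    unfolding trace_eq \<phi>_def by (simp add: mult.assoc)
qed

lemma theta_perturbed_cong:
  fixes H V V' :: "real \<Rightarrow> qop" and a :: "real \<Rightarrow> real"
  assumes T: "0 \<le> T" and U1: "\<forall>t\<in>{0..T}. U1_invariant n (H t)"
    and H: "pw_continuous_ham n T H" and a: "pw_continuous_on 0 T a" and qs: "distinct qs"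
    and V: "propagator n T H V"
    and V': "propagator n T (\<lambda>t S R. H t S R + complex_of_real (a t) * Zprod n qs S R) V'"
  shows "cong_2pi (theta n (V' T) m) (theta n (V T) m - parity_sum n (set qs) m * integral {0..T} a)"
proof -
  obtain E where E: "finite E" and a_cont: "continuous_on ({0..T} - E) a"
    and H_cont: "\<And>S R. S \<in> qbasis n \<Longrightarrow> R \<in> qbasis n \<Longrightarrow> continuous_on ({0..T} - E) (\<lambda>t. H t S R)"
    using pw_continuous_ham_common_exceptions[OF H a] by blast
  have conserving: "H t S R = 0"
    if "t \<in> {0..T}" "S \<in> qbasis n" "R \<in> qbasis n" "card S \<noteq> card R" for t S R
    using U1_invariant_offdiagonal_sector U1 that by blast
  define A where "A = integral {0..T} a"
  define \<phi> where "\<phi> = parity_sum n (set qs) m"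
  define h where "h = integral {0..T} (\<lambda>t. \<Sum>S\<in>sector n m. - \<i> * H t S S)"
  have h: "((\<lambda>t. \<Sum>S\<in>sector n m. - \<i> * H t S S) has_integral h) {0..T}"
    unfolding h_def using H
    by (intro integrable_integral integrable_sum integrable_on_mult_right pw_continuous_on_integrable)
      (auto simp: pw_continuous_ham_def)
  have A: "(a has_integral A) {0..T}"
    using pw_continuous_on_integrable[OF a] unfolding A_def by (rule integrable_integral)
  have "det_on (sector n m) (V T) = exp h"
    by (rule det_on_sector_propagator[OF T E conserving H_cont h V])
  moreover have "det_on (sector n m) (V' T) = exp (h - \<i> * of_real (\<phi> * A))"
    unfolding \<phi>_def by (rule det_on_sector_perturbed[OF T E qs conserving H_cont a_cont h A V'])
  moreover obtain k :: int where "Arg (exp h) - Im h = 2 * pi * k"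
    using cong_2pi_Arg_exp unfolding cong_2pi_def by blast
  moreover obtain k' :: int where
    "Arg (exp (h - \<i> * of_real (\<phi> * A))) - Im (h - \<i> * of_real (\<phi> * A)) = 2 * pi * k'"
    using cong_2pi_Arg_exp unfolding cong_2pi_def by blast
  ultimately show ?thesis
    unfolding theta_def cong_2pi_def A_def[symmetric] \<phi>_def[symmetric]
    by (intro exI[of _ "k' - k"]) (simp add: algebra_simps)
qed

theorem mainTheorem4:
  fixes n k :: nat and T :: real and H V V' :: "real \<Rightarrow> qop"
    and qs :: "nat list" and a :: "real \<Rightarrow> real"
  assumes "n \<ge> 2" and "0 \<le> T"
    and "\<forall>t\<in>{0..T}. hermitian_op n (H t)"
    and "\<forall>t\<in>{0..T}. U1_invariant n (H t)"
    and "pw_continuous_ham n T H"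
    and "1 \<le> k" and "k \<le> n" and "length qs = k" and "distinct qs" and "set qs \<subseteq> {1..n}"
    and "pw_continuous_on 0 T a"
    and "propagator n T H V"
    and "propagator n T (\<lambda>t S R. H t S R + complex_of_real (a t) * Zprod n qs S R) V'"
  shows "(even k \<longrightarrow> cong_2pi (Delta3 n (V' T)) (Delta3 n (V T))) \<and>
         (odd k \<longrightarrow> cong_2pi (Delta3 n (V' T))
                      (Delta3 n (V T) - 4 * (real k - 1) * integral {0..T} a))"
proof -
  define A where "A = integral {0..T} a"
  define \<phi> where "\<phi> m = parity_sum n (set qs) m * A" for m
  have card_qs: "card (set qs) = k"
    using assms(8,9) by (simp add: distinct_card)
  have "cong_2pi (theta n (V' T) m) (theta n (V T) m - \<phi> m)" for m
    unfolding \<phi>_def A_def using assms(2,4,5,11,9,12,13) by (rule theta_perturbed_cong)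
  then have "cong_2pi (Delta3 n (V' T)) (Delta3 n (V T) - (\<phi> (n - 1) - \<phi> 1 - (real n - 2) * (\<phi> n - \<phi> 0)))"
    by (rule cong_2pi_Delta3)
  moreover have "\<phi> (n - 1) - \<phi> 1 - (real n - 2) * (\<phi> n - \<phi> 0)
      = (parity_sum n (set qs) (n - 1) - parity_sum n (set qs) 1
          - (real n - 2) * (parity_sum n (set qs) n - parity_sum n (set qs) 0)) * A"
    unfolding \<phi>_def by (simp add: algebra_simps)
  also have "\<dots> = (if even k then 0 else 4 * (real k - 1)) * A"
    using parity_sum_Delta3_combination[OF assms(10)] assms(1) card_qs by simp
  ultimately show ?thesis
    unfolding A_def by auto
qed

end
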